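(* Let $\mathcal E$ be a finite dimensional Hilbert space and let $\psi_1\in\mathcal C$ satisfy $$0\ge\operatorname{Re}\big[(\psi_1(z)+I)(\psi_1(z)-I)^{-1}\big]\ge\operatorname{Re}\big[(z+1)(z-1)^{-1}\big]I\quad\text{for all }z\in\mathbb D. \quad ( * )$$ Then there exists a unique $\psi_2\in\mathcal C$ satisfying $( * )$ (with $\psi_2$ in place of $\psi_1$) such that $(\psi_1,\psi_2)$ is a factorizing pair.
   Context: $\mathbb D$ is the open unit disc, $H^2_{\mathbb D}(\mathcal E)$ the $\mathcal E$-valued Hardy space, $M_\psi$ multiplication by $\psi$, and $\operatorname{Re}X=(X+X^* )/2$. $\mathcal C=\{\psi\in H^\infty_{\mathbb D}(\mathcal B(\mathcal E)):\sup_z\|\psi(z)\|\le1,\ 1\text{ is not an eigenvalue of }\psi(z)\text{ for any }z\in\mathbb D\}$. $\varphi_t(\lambda)=e^{t\frac{\lambda+1}{\lambda-1}}$, $(\varphi_t\circ\psi)(z)=\varphi_t(\psi(z))$, $\mathfrak z^{\mathcal E}(w)=wI_{\mathcal E}$. A pair $(\psi_1,\psi_2)$ in $\mathcal C$ is a factorizing pair if $M_{\varphi_t\circ\psi_1}M_{\varphi_t\circ\psi_2}=M_{\varphi_t\circ\psi_2}M_{\varphi_t\circ\psi_1}=M_{\varphi_t\circ\mathfrak z^{\mathcal E}}$ for all $t\ge0$. *)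

theory Defs
  imports "HOL-Analysis.Analysis"
begin

text \<open>The finite-dimensional Hilbert space E is modelled as complex^'n for a finite type 'n;
  operators on E are complex matrices complex^'n^'n acting by *v.\<close>

type_synonym 'n op = "complex^'n^'n"

definition unit_disc :: "complex set" where
  "unit_disc = ball 0 1"

definition smat :: "complex \<Rightarrow> 'n::finite op \<Rightarrow> 'n op" where
  "smat c A = (\<chi> i j. c * A $ i $ j)"

definition adj :: "'n::finite op \<Rightarrow> 'n op" where
  "adj A = (\<chi> i j. cnj (A $ j $ i))"

definition op_re :: "'n::finite op \<Rightarrow> 'n op" where
  "op_re X = smat (1/2) (X + adj X)"

definition op_norm :: "'n::finite op \<Rightarrow> real" where
  "op_norm A = onorm (\<lambda>x. A *v x)"

definition loewner_le :: "'n::finite op \<Rightarrow> 'n op \<Rightarrow> bool" where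
  "loewner_le A B \<longleftrightarrow>
     (\<forall>x::complex^'n. let q = (\<Sum>i\<in>UNIV. cnj (x $ i) * ((B - A) *v x) $ i)
                     in Im q = 0 \<and> Re q \<ge> 0)"

fun mpow :: "'n::finite op \<Rightarrow> nat \<Rightarrow> 'n op" where
  "mpow A 0 = mat 1"
| "mpow A (Suc k) = A ** mpow A k"

definition mexp :: "'n::finite op \<Rightarrow> 'n op" where
  "mexp A = (\<Sum>k. smat (inverse (of_nat (fact k))) (mpow A k))"

definition cayley :: "'n::finite op \<Rightarrow> 'n op" where
  "cayley A = (A + mat 1) ** matrix_inv (A - mat 1)"

text \<open>phi_t(A) = exp(t (A+I)(A-I)^{-1}) (holomorphic functional calculus of
  phi_t(lambda) = e^{t(lambda+1)/(lambda-1)}, for A without eigenvalue 1).\<close>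
definition phi :: "real \<Rightarrow> 'n::finite op \<Rightarrow> 'n op" where
  "phi t A = mexp (smat (complex_of_real t) (cayley A))"

definition phi_comp :: "real \<Rightarrow> (complex \<Rightarrow> 'n::finite op) \<Rightarrow> complex \<Rightarrow> 'n op" where
  "phi_comp t \<psi> = (\<lambda>z. phi t (\<psi> z))"

definition zE :: "complex \<Rightarrow> 'n::finite op" where
  "zE z = mat z"

definition Hinf :: "(complex \<Rightarrow> 'n::finite op) set" where
  "Hinf = {\<psi>. (\<forall>i j. (\<lambda>z. \<psi> z $ i $ j) holomorphic_on unit_disc)
              \<and> (\<exists>B. \<forall>z\<in>unit_disc. op_norm (\<psi> z) \<le> B)}"

definition classC :: "(complex \<Rightarrow> 'n::finite op) set" where
  "classC = {\<psi>. \<psi> \<in> Hinf \<and> (\<forall>z\<in>unit_disc. op_norm (\<psi> z) \<le> 1)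
               \<and> (\<forall>z\<in>unit_disc. \<not> (\<exists>x. x \<noteq> 0 \<and> \<psi> z *v x = x))}"

definition H2 :: "(complex \<Rightarrow> complex^'n::finite) set" where
  "H2 = {f. (\<forall>i. (\<lambda>z. f z $ i) holomorphic_on unit_disc)
           \<and> (\<forall>z. z \<notin> unit_disc \<longrightarrow> f z = 0)
           \<and> (\<exists>B. \<forall>r. 0 < r \<and> r < 1 \<longrightarrow>
                 (\<lambda>\<theta>. (norm (f (of_real r * cis \<theta>)))\<^sup>2) integrable_on {0..2*pi}
               \<and> integral {0..2*pi} (\<lambda>\<theta>. (norm (f (of_real r * cis \<theta>)))\<^sup>2) \<le> B)}"

definition Mult :: "(complex \<Rightarrow> 'n::finite op) \<Rightarrow> (complex \<Rightarrow> complex^'n) \<Rightarrow> (complex \<Rightarrow> complex^'n)" where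
  "Mult \<psi> f = (\<lambda>z. if z \<in> unit_disc then \<psi> z *v f z else 0)"

definition op_eq_H2 :: "((complex \<Rightarrow> complex^'n::finite) \<Rightarrow> (complex \<Rightarrow> complex^'n))
     \<Rightarrow> ((complex \<Rightarrow> complex^'n) \<Rightarrow> (complex \<Rightarrow> complex^'n)) \<Rightarrow> bool" where
  "op_eq_H2 S T \<longleftrightarrow> (\<forall>f\<in>H2. S f = T f)"

definition factorizing_pair :: "(complex \<Rightarrow> 'n::finite op) \<Rightarrow> (complex \<Rightarrow> 'n op) \<Rightarrow> bool" where
  "factorizing_pair \<psi>1 \<psi>2 \<longleftrightarrow> \<psi>1 \<in> classC \<and> \<psi>2 \<in> classC \<and>
     (\<forall>t::real. t \<ge> 0 \<longrightarrow>
        op_eq_H2 (Mult (phi_comp t \<psi>1) \<circ> Mult (phi_comp t \<psi>2)) (Mult (phi_comp t zE))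
      \<and> op_eq_H2 (Mult (phi_comp t \<psi>2) \<circ> Mult (phi_comp t \<psi>1)) (Mult (phi_comp t zE)))"

definition cond_star :: "(complex \<Rightarrow> 'n::finite op) \<Rightarrow> bool" where
  "cond_star \<psi> \<longleftrightarrow> (\<forall>z\<in>unit_disc.
      loewner_le (op_re (cayley (\<psi> z))) 0
    \<and> loewner_le (mat (complex_of_real (Re ((z + 1) / (z - 1))))) (op_re (cayley (\<psi> z))))"

end

theory Submission
  imports Defs
begin

text \<open>
  Write C(A) = (A + I)(A - I)\<inverse> for the Cayley transform, so that \<phi>_t(A) = exp (t C(A)) and
  C(z I) = w(z) I with w(z) = (z + 1)/(z - 1). On matrices without eigenvalue 1 the Cayley
  transform is an involution. Condition (*) says that both C(\<psi>(z)) and w(z) I - C(\<psi>(z)) are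
  dissipative, and a pair in the class is factorizing exactly when C(\<psi>1(z)) + C(\<psi>2(z)) = w(z) I:
  if the sum is scalar, the two exponentials commute and multiply to exp (t w(z)) I; conversely,
  differentiating the product identity at t = 0 recovers the sum. So \<psi>2 is forced to be
  C(w I - C(\<psi>1)). It lies in the class because the Cayley transform of a dissipative matrix is a
  contraction without eigenvalue 1, and it satisfies (*) because (*) is symmetric under
  C \<mapsto> w I - C.
\<close>

lemma exp_scaleR_mult_eq_imp_add_eq:
  fixes a b c :: "'a::{real_normed_algebra_1,banach}"
  assumes "\<And>t. t \<ge> 0 \<Longrightarrow> exp (t *\<^sub>R a) * exp (t *\<^sub>R b) = exp (t *\<^sub>R c)"
  shows "a + b = c"
proof -
  have "((\<lambda>t. exp (t *\<^sub>R a) * exp (t *\<^sub>R b)) has_vector_derivative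
      exp (0 *\<^sub>R a) * (exp (0 *\<^sub>R b) * b) + exp (0 *\<^sub>R a) * a * exp (0 *\<^sub>R b))
      (at 0 within {0..})"
    by (intro has_vector_derivative_mult exp_scaleR_has_vector_derivative_right)
  then have "((\<lambda>t. exp (t *\<^sub>R a) * exp (t *\<^sub>R b)) has_vector_derivative b + a) (at 0 within {0..})"
    by simp
  then have "((\<lambda>t. exp (t *\<^sub>R c)) has_vector_derivative b + a) (at 0 within {0..})"
    by (rule has_vector_derivative_transform_within[where d = 1]) (auto simp: assms)
  moreover have "((\<lambda>t. exp (t *\<^sub>R c)) has_vector_derivative c) (at 0 within {0..})"
    using exp_scaleR_has_vector_derivative_right[where A = c and t = 0] by simp
  moreover have "at (0::real) within {0..} \<noteq> bot"
    by (simp add: at_within_Ici_at_right)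
  ultimately show ?thesis
    by (metis vector_derivative_unique_within add.commute)
qed

lemma cayley_transform_involutive:
  fixes a b :: "'a::real_algebra_1"
  assumes "b * (a - 1) = 1" and "(a - 1) * b = 1"
  shows "((a + 1) * b - 1) * ((1/2) *\<^sub>R (a - 1)) = 1"
    and "((a + 1) * b + 1) * ((1/2) *\<^sub>R (a - 1)) = a"
proof -
  define u where "u = (1/2) *\<^sub>R (a - 1)"
  have u: "u + u = a - 1"
    by (simp add: u_def flip: scaleR_add_left)
  have "(a + 1) * b = (a - 1) * b + (b + b)"
    by (simp add: algebra_simps)
  then have c: "(a + 1) * b = 1 + (b + b)"
    using assms(2) by simp
  have "(b + b) * u = b * (u + u)"
    by (simp add: algebra_simps)
  then show "((a + 1) * b - 1) * u = 1"
    using assms(1) by (simp add: c u)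
  then show "((a + 1) * b + 1) * u = a"
    by (simp add: c algebra_simps u)
qed

lemma mat_matrix_mult: "mat c ** A = (\<chi> i j. c * A $ i $ j)" for c :: "'a::comm_semiring_1"
  by (simp add: matrix_matrix_mult_def mat_def vec_eq_iff if_distrib if_distribR sum.delta
      cong: if_cong)

lemma matrix_mult_mat: "A ** mat c = (\<chi> i j. c * A $ i $ j)" for c :: "'a::comm_semiring_1"
  by (simp add: matrix_matrix_mult_def mat_def vec_eq_iff if_distrib if_distribR sum.delta'
      mult.commute cong: if_cong)

lemma mat_matrix_mult_commute: "mat c ** A = A ** mat (c :: 'a::comm_semiring_1)"
  by (simp add: mat_matrix_mult matrix_mult_mat)

lemma mat_mult_mat: "mat a ** mat b = mat (a * b :: 'a::comm_semiring_1)"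
  unfolding mat_matrix_mult by (simp add: vec_eq_iff mat_def)

lemma mat_add_mat: "mat a + mat b = mat (a + b :: 'a::monoid_add)"
  by (simp add: vec_eq_iff mat_def)

lemma mat_diff_mat: "mat a - mat b = mat (a - b :: 'a::ring)"
  by (simp add: vec_eq_iff mat_def)

lemma matrix_vector_mult_axis: "(A *v axis k 1) $ i = A $ i $ (k :: 'n::finite)"
  for A :: "'a::semiring_1^'n^'m"
  by (simp add: matrix_vector_mult_def axis_def if_distrib cong: if_cong)

lemma invertible_iff_ker_trivial:
  "invertible (A :: 'a::field^'n::finite^'n) \<longleftrightarrow> (\<forall>x. A *v x = 0 \<longrightarrow> x = 0)"
  by (metis invertible_left_inverse matrix_left_invertible_ker)

lemma matrix_inv_invertible:
  assumes "invertible A"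
  shows "A ** matrix_inv A = mat 1" and "matrix_inv A ** A = mat 1"
  using someI_ex[OF assms[unfolded invertible_def]] by (simp_all add: matrix_inv_def)

lemma matrix_inv_unique:
  fixes A B :: "'a::field^'n::finite^'n"
  assumes "A ** B = mat 1"
  shows "matrix_inv A = B"
proof -
  have "invertible A"
    using assms invertible_right_inverse by blast
  then have "matrix_inv A = matrix_inv A ** (A ** B)"
    using assms by simp
  also have "\<dots> = B"
    using \<open>invertible A\<close> by (simp add: matrix_mul_assoc matrix_inv_invertible)
  finally show ?thesis .
qed

lemma matrix_inv_entry_cramer:
  fixes A :: "'a::field^'n::finite^'n"
  assumes "invertible A"
  shows "matrix_inv A $ i $ k = det (\<chi> r c. if c = i then axis k 1 $ r else A $ r $ c) / det A"
proof -
  have "A *v (matrix_inv A *v axis k 1) = axis k 1"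
    using assms by (simp add: matrix_vector_mul_assoc matrix_inv_invertible)
  then have "matrix_inv A *v axis k 1
      = (\<chi> i. det (\<chi> r c. if c = i then axis k 1 $ r else A $ r $ c) / det A)"
    using cramer[THEN iffD1] assms invertible_det_nz by blast
  from arg_cong[OF this, of "\<lambda>v. v $ i"] show ?thesis
    by (simp add: matrix_vector_mult_axis)
qed

lemma norm_vec_le_sum_norm: "norm (x :: 'a::real_normed_vector^'n::finite) \<le> (\<Sum>i\<in>UNIV. norm (x $ i))"
  by (simp add: norm_vec_def L2_set_le_sum)

lemma norm_matrix_entry_le_op_norm: "cmod (A $ i $ j) \<le> op_norm (A :: complex^'n::finite^'n)"
proof -
  have "cmod (A $ i $ j) = norm ((A *v axis j 1) $ i)"
    by (simp add: matrix_vector_mult_def axis_def if_distrib cong: if_cong)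
  also have "\<dots> \<le> norm (A *v axis j 1)"
    by (rule Finite_Cartesian_Product.norm_nth_le)
  also have "\<dots> \<le> op_norm A * norm (axis j (1::complex))"
    unfolding op_norm_def by (rule onorm[OF matrix_vector_mul_bounded_linear])
  also have "norm (axis j (1::complex)) = 1"
    by (simp add: norm_vec_def L2_set_def axis_def if_distrib if_distribR cong: if_cong)
  finally show ?thesis by simp
qed

lemma norm_le_op_norm: "norm (A :: complex^'n::finite^'n) \<le> real CARD('n) ^ 2 * op_norm A"
proof -
  have "norm A \<le> (\<Sum>i\<in>UNIV. \<Sum>j\<in>UNIV. cmod (A $ i $ j))"
    by (intro order_trans[OF norm_vec_le_sum_norm] sum_mono norm_vec_le_sum_norm)
  also have "\<dots> \<le> (\<Sum>i\<in>(UNIV::'n set). \<Sum>j\<in>(UNIV::'n set). op_norm A)"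
    by (intro sum_mono norm_matrix_entry_le_op_norm)
  finally show ?thesis
    by (simp add: power2_eq_square)
qed

lemma op_norm_le_norm: "op_norm (A :: complex^'n::finite^'n) \<le> real CARD('n) ^ 2 * norm A"
  unfolding op_norm_def
proof (rule onorm_le)
  fix x :: "complex^'n"
  have "norm (A *v x) \<le> (\<Sum>i\<in>UNIV. \<Sum>j\<in>UNIV. norm (A $ i $ j * x $ j))"
    by (intro order_trans[OF norm_vec_le_sum_norm] sum_mono)
      (simp add: matrix_vector_mult_def norm_sum)
  also have "\<dots> \<le> (\<Sum>i\<in>(UNIV::'n set). \<Sum>j\<in>(UNIV::'n set). norm A * norm x)"
    unfolding norm_mult
    by (intro sum_mono mult_mono Finite_Cartesian_Product.norm_nth_le
        order_trans[OF Finite_Cartesian_Product.norm_nth_le Finite_Cartesian_Product.norm_nth_le]) simp_all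
  finally show "norm (A *v x) \<le> real CARD('n) ^ 2 * norm A * norm x"
    by (simp add: power2_eq_square)
qed

section \<open>Matrices with the operator norm as a Banach algebra\<close>

text \<open>A copy of the matrix type carrying the operator norm, so that the library's \<open>exp\<close> of
  Banach algebras becomes available.\<close>

typedef (overloaded) 'n opmat = "UNIV :: (complex^'n::finite^'n) set"
  morphisms mat_of opmat
  by simp

setup_lifting type_definition_opmat

instantiation opmat :: (finite) real_normed_algebra_1
begin

lift_definition zero_opmat :: "'a opmat" is 0 .
lift_definition one_opmat :: "'a opmat" is "mat 1" .
lift_definition plus_opmat :: "'a opmat \<Rightarrow> 'a opmat \<Rightarrow> 'a opmat" is "(+)" .
lift_definition minus_opmat :: "'a opmat \<Rightarrow> 'a opmat \<Rightarrow> 'a opmat" is "(-)" .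
lift_definition uminus_opmat :: "'a opmat \<Rightarrow> 'a opmat" is uminus .
lift_definition times_opmat :: "'a opmat \<Rightarrow> 'a opmat \<Rightarrow> 'a opmat" is "(**)" .
lift_definition scaleR_opmat :: "real \<Rightarrow> 'a opmat \<Rightarrow> 'a opmat" is scaleR .
lift_definition norm_opmat :: "'a opmat \<Rightarrow> real" is op_norm .

definition dist_opmat :: "'a opmat \<Rightarrow> 'a opmat \<Rightarrow> real"
  where "dist_opmat a b = norm (a - b)"

definition uniformity_opmat :: "('a opmat \<times> 'a opmat) filter"
  where "uniformity_opmat = (INF e\<in>{0<..}. principal {(x, y). dist x y < e})"

definition open_opmat :: "'a opmat set \<Rightarrow> bool"
  where "open_opmat S = (\<forall>x\<in>S. \<forall>\<^sub>F (x', y) in uniformity. x' = x \<longrightarrow> y \<in> S)"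

definition sgn_opmat :: "'a opmat \<Rightarrow> 'a opmat"
  where "sgn_opmat x = inverse (norm x) *\<^sub>R x"

instance
proof
  fix a b c :: "'a opmat" and r s :: real
  show "a + b + c = a + (b + c)" "a + b = b + a" "0 + a = a" "- a + a = 0" "a - b = a + - b"
    by (transfer; simp add: algebra_simps)+
  show "r *\<^sub>R (a + b) = r *\<^sub>R a + r *\<^sub>R b" "(r + s) *\<^sub>R a = r *\<^sub>R a + s *\<^sub>R a"
    "r *\<^sub>R s *\<^sub>R a = (r * s) *\<^sub>R a" "1 *\<^sub>R a = a"
    by (transfer; simp add: scaleR_add_right scaleR_add_left)+
  show "a * b * c = a * (b * c)" "1 * a = a" "a * 1 = a"
    by (transfer; simp add: matrix_mul_assoc)+
  show "(a + b) * c = a * c + b * c" "a * (b + c) = a * b + a * c"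
    by (transfer; simp add: matrix_add_ldistrib vec_eq_iff matrix_matrix_mult_def sum.distrib
        algebra_simps)+
  show "r *\<^sub>R a * b = r *\<^sub>R (a * b)" "a * r *\<^sub>R b = r *\<^sub>R (a * b)"
    by (transfer; simp add: scalar_matrix_assoc matrix_scalar_ac)+
  show "(0::'a opmat) \<noteq> 1"
    by transfer (simp add: vec_eq_iff mat_def)
  show "norm a = 0 \<longleftrightarrow> a = 0"
    by transfer (metis op_norm_def onorm_eq_0 matrix_vector_mul_bounded_linear matrix_eq
        matrix_vector_mult_0 matrix_vector_mult_0_right)
  show "norm (a + b) \<le> norm a + norm b"
    by transfer (use onorm_triangle[OF matrix_vector_mul_bounded_linear matrix_vector_mul_bounded_linear]
        in \<open>simp add: op_norm_def matrix_vector_mult_add_rdistrib\<close>)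
  show "norm (r *\<^sub>R a) = \<bar>r\<bar> * norm a"
  proof transfer
    fix r and A :: "complex^'a^'a"
    have "(r *\<^sub>R A) *v x = r *\<^sub>R (A *v x)" for x
      by (simp add: vec_eq_iff matrix_vector_mult_def scaleR_sum_right)
    then show "op_norm (r *\<^sub>R A) = \<bar>r\<bar> * op_norm A"
      using onorm_scaleR[OF matrix_vector_mul_bounded_linear] by (simp add: op_norm_def)
  qed
  show "norm (a * b) \<le> norm a * norm b"
    by transfer (use onorm_compose[OF matrix_vector_mul_bounded_linear matrix_vector_mul_bounded_linear]
        in \<open>simp add: op_norm_def o_def matrix_vector_mul_assoc\<close>)
  show "norm (1::'a opmat) = 1"
    by transfer (simp add: op_norm_def onorm_id)
  show "dist a b = norm (a - b)"
    by (simp add: dist_opmat_def)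
  show "sgn a = inverse (norm a) *\<^sub>R a"
    by (simp add: sgn_opmat_def)
qed (simp_all add: uniformity_opmat_def open_opmat_def)

end

lemma bounded_linear_mat_of: "bounded_linear (mat_of :: 'n::finite opmat \<Rightarrow> _)"
proof (rule bounded_linear_intro[where K = "real CARD('n) ^ 2"])
  show "norm (mat_of x) \<le> norm x * real CARD('n) ^ 2" for x :: "'n opmat"
    using norm_le_op_norm[of "mat_of x"] by (simp add: norm_opmat.rep_eq mult.commute)
qed (simp_all add: plus_opmat.rep_eq scaleR_opmat.rep_eq)

lemma bounded_linear_opmat: "bounded_linear (opmat :: _ \<Rightarrow> 'n::finite opmat)"
proof (rule bounded_linear_intro[where K = "real CARD('n) ^ 2"])
  show "norm (opmat A :: 'n opmat) \<le> norm A * real CARD('n) ^ 2" for A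
    using op_norm_le_norm[of A] by (simp add: norm_opmat.abs_eq mult.commute)
qed (simp_all add: plus_opmat.abs_eq[symmetric] scaleR_opmat.abs_eq[symmetric])

instance opmat :: (finite) banach
proof
  fix X :: "nat \<Rightarrow> 'a opmat"
  assume "Cauchy X"
  then have "convergent (\<lambda>n. mat_of (X n))"
    using bounded_linear.Cauchy[OF bounded_linear_mat_of] Cauchy_convergent_iff by blast
  then have "convergent (\<lambda>n. opmat (mat_of (X n)))"
    by (auto simp: convergent_def intro: bounded_linear.tendsto[OF bounded_linear_opmat])
  then show "convergent X"
    by (simp add: mat_of_inverse)
qed

lemmas mat_of_opmat_ops [simp] = zero_opmat.rep_eq one_opmat.rep_eq plus_opmat.rep_eq
  minus_opmat.rep_eq uminus_opmat.rep_eq times_opmat.rep_eq scaleR_opmat.rep_eq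

lemma mat_of_power: "mat_of (x ^ k) = mpow (mat_of x) k"
  by (induction k) simp_all

lemma smat_of_real: "smat (of_real r) A = r *\<^sub>R A"
  by (simp add: smat_def vec_eq_iff) (simp add: scaleR_conv_of_real)

lemma mexp_eq_exp: "mexp A = mat_of (exp (opmat A))"
proof -
  have "mat_of (opmat A ^ k /\<^sub>R fact k) = smat (inverse (of_nat (fact k))) (mpow A k)" for k
  proof -
    have "(inverse (of_nat (fact k)) :: complex) = of_real (inverse (fact k))"
      by simp
    then show ?thesis
      by (simp only: smat_of_real) (simp add: mat_of_power opmat_inverse)
  qed
  moreover have "mat_of (exp (opmat A)) = (\<Sum>k. mat_of (opmat A ^ k /\<^sub>R fact k))"
    unfolding exp_def by (rule bounded_linear.suminf[OF bounded_linear_mat_of summable_exp_generic])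
  ultimately show ?thesis
    by (simp add: mexp_def)
qed

lemma phi_eq_exp: "phi t A = mat_of (exp (t *\<^sub>R opmat (cayley A)))"
proof -
  have "opmat (smat (of_real t) (cayley A)) = t *\<^sub>R opmat (cayley A)"
    by (simp add: smat_of_real scaleR_opmat.abs_eq)
  then show ?thesis
    by (simp add: phi_def mexp_eq_exp)
qed

lemma opmat_mat_commute: "opmat (mat c) * x = x * opmat (mat c)"
  by (simp add: mat_of_inject[symmetric] opmat_inverse mat_matrix_mult_commute)

section \<open>The Cayley transform and dissipative matrices\<close>

lemma invertible_minus_mat_1:
  fixes A :: "'a::field^'n::finite^'n"
  assumes "\<And>v. A *v v = v \<Longrightarrow> v = 0"
  shows "invertible (A - mat 1)"
  unfolding invertible_iff_ker_trivial using assms by (simp add: matrix_vector_mult_diff_rdistrib)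

lemma cayley_mat:
  assumes "c \<noteq> 1"
  shows "cayley (mat c :: 'n::finite op) = mat ((c + 1) / (c - 1))"
proof -
  have "matrix_inv (mat c - mat 1 :: 'n op) = mat (1 / (c - 1))"
    using assms by (intro matrix_inv_unique) (simp add: mat_diff_mat mat_mult_mat)
  then show ?thesis
    unfolding cayley_def by (simp add: mat_add_mat mat_mult_mat)
qed

lemma cayley_cayley:
  assumes "\<And>v. A *v v = v \<Longrightarrow> v = 0"
  shows "cayley (cayley A) = A"
proof -
  define a b where "a = opmat A" and "b = opmat (matrix_inv (A - mat 1))"
  have "b * (a - 1) = 1" and "(a - 1) * b = 1"
    using matrix_inv_invertible[OF invertible_minus_mat_1[OF assms]]
    by (simp_all add: a_def b_def mat_of_inject[symmetric] opmat_inverse)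
  note ab = cayley_transform_involutive[OF this]
  have cayley_A: "cayley A = mat_of ((a + 1) * b)"
    by (simp add: cayley_def a_def b_def opmat_inverse)
  have "matrix_inv (cayley A - mat 1) = mat_of ((1/2) *\<^sub>R (a - 1))"
    using arg_cong[OF ab(1), of mat_of]
    by (intro matrix_inv_unique) (simp add: cayley_A matrix_scalar_ac flip: scalar_matrix_assoc)
  then show ?thesis
    using arg_cong[OF ab(2), of mat_of]
    by (simp add: cayley_def cayley_A a_def b_def opmat_inverse matrix_scalar_ac
        flip: scalar_matrix_assoc)
qed

definition quad_form :: "'n::finite op \<Rightarrow> complex^'n \<Rightarrow> complex" where
  "quad_form M x = (\<Sum>i\<in>UNIV. cnj (x $ i) * (M *v x) $ i)"

lemma loewner_le_iff_quad_form:
  "loewner_le A B \<longleftrightarrow>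
    (\<forall>x. Im (quad_form B x) = Im (quad_form A x) \<and> Re (quad_form A x) \<le> Re (quad_form B x))"
  by (simp add: loewner_le_def quad_form_def Let_def matrix_vector_mult_diff_rdistrib
      sum_subtractf ring_distribs)

lemma Re_quad_form: "Re (quad_form M x) = (M *v x) \<bullet> x"
  by (simp add: quad_form_def inner_vec_def Re_sum inner_complex_def mult.commute)

lemma quad_form_add: "quad_form (M + N) x = quad_form M x + quad_form N x"
  by (simp add: quad_form_def matrix_vector_mult_add_rdistrib sum.distrib ring_distribs)

lemma quad_form_smat: "quad_form (smat c M) x = c * quad_form M x"
  by (simp add: quad_form_def smat_def matrix_vector_mult_def sum_distrib_left algebra_simps)

lemma quad_form_adj: "quad_form (adj M) x = cnj (quad_form M x)"
proof -
  have "quad_form (adj M) x = (\<Sum>i\<in>UNIV. \<Sum>j\<in>UNIV. cnj (x $ i) * cnj (M $ j $ i) * x $ j)"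
    by (simp add: quad_form_def adj_def matrix_vector_mult_def sum_distrib_left mult.assoc)
  also have "\<dots> = (\<Sum>j\<in>UNIV. \<Sum>i\<in>UNIV. x $ j * (cnj (M $ j $ i) * cnj (x $ i)))"
    by (subst sum.swap) (simp add: ac_simps)
  also have "\<dots> = cnj (quad_form M x)"
    by (simp add: quad_form_def matrix_vector_mult_def sum_distrib_left)
  finally show ?thesis .
qed

lemma quad_form_op_re: "quad_form (op_re M) x = of_real ((M *v x) \<bullet> x)"
  by (simp add: op_re_def quad_form_smat quad_form_add quad_form_adj complex_add_cnj
      flip: Re_quad_form)

lemma quad_form_mat: "quad_form (mat c) x = c * of_real ((norm x)\<^sup>2)"
proof -
  have "quad_form (mat c) x = (\<Sum>i\<in>UNIV. c * of_real ((cmod (x $ i))\<^sup>2))"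
    unfolding quad_form_def
    by (intro sum.cong)
      (simp_all add: matrix_vector_mult_def mat_def if_distrib if_distribR sum.delta
        complex_mult_cnj cmod_power2 mult.commute[of "cnj _"] cong: if_cong)
  then show ?thesis
    by (simp add: norm_vec_def L2_set_def sum_distrib_left sum_nonneg)
qed

definition dissipative :: "'n::finite op \<Rightarrow> bool" where
  "dissipative A \<longleftrightarrow> (\<forall>x. (A *v x) \<bullet> x \<le> 0)"

lemma dissipative_fixed_point:
  assumes "dissipative A" and "A *v v = v"
  shows "v = 0"
  using assms(1)[unfolded dissipative_def, THEN spec[of _ v]] assms(2)
  by (metis antisym inner_ge_zero inner_eq_zero_iff)

lemma dissipative_cayley:
  assumes "dissipative A"
  shows "op_norm (cayley A) \<le> 1" and "\<And>v. cayley A *v v = v \<Longrightarrow> v = 0"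
proof -
  define B where "B = matrix_inv (A - mat 1)"
  have B: "(A - mat 1) ** B = mat 1"
    using matrix_inv_invertible invertible_minus_mat_1 dissipative_fixed_point[OF assms]
    unfolding B_def by blast
  have cayley_mult: "cayley A *v v = A *v (B *v v) + B *v v" for v
    by (simp add: cayley_def B_def matrix_vector_mult_add_rdistrib flip: matrix_vector_mul_assoc)
  have eq: "v = A *v (B *v v) - B *v v" for v
    using arg_cong[OF B, of "\<lambda>M. M *v v"]
    by (simp add: matrix_vector_mult_diff_rdistrib flip: matrix_vector_mul_assoc)
  have "norm (cayley A *v v) \<le> norm v" for v
  proof -
    let ?u = "B *v v"
    have "(norm (A *v ?u + ?u))\<^sup>2 - (norm (A *v ?u - ?u))\<^sup>2 = 4 * ((A *v ?u) \<bullet> ?u)"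
      using dot_norm[of "A *v ?u" ?u] dot_norm_neg[of "A *v ?u" ?u] by simp
    also have "\<dots> \<le> 0"
      using assms by (simp add: dissipative_def)
    finally have "(norm (cayley A *v v))\<^sup>2 \<le> (norm v)\<^sup>2"
      by (simp add: cayley_mult flip: eq)
    then show ?thesis
      by (rule power2_le_imp_le) simp
  qed
  then show "op_norm (cayley A) \<le> 1"
    unfolding op_norm_def by (intro onorm_le) simp
  show "v = 0" if "cayley A *v v = v" for v
  proof -
    have "B *v v = 0"
      using that eq[of v] by (simp add: cayley_mult vec_eq_iff)
    then show ?thesis
      using eq[of v] by simp
  qed
qed

lemma cond_star_iff_dissipative:
  "cond_star \<psi> \<longleftrightarrow> (\<forall>z\<in>unit_disc.
     dissipative (cayley (\<psi> z)) \<and> dissipative (mat ((z + 1) / (z - 1)) - cayley (\<psi> z)))"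
proof -
  have "((mat w - A) *v x) \<bullet> x = Re w * (norm x)\<^sup>2 - (A *v x) \<bullet> x" for w A and x :: "complex^'a"
    using quad_form_mat[of w x]
    by (simp add: matrix_vector_mult_diff_rdistrib inner_diff_left flip: Re_quad_form)
  then show ?thesis
    by (auto simp: cond_star_def dissipative_def loewner_le_iff_quad_form quad_form_op_re
        quad_form_mat simp flip: mat_0)
qed

section \<open>Holomorphic matrix functions and the class C\<close>

definition mat_holomorphic_on :: "(complex \<Rightarrow> 'n::finite op) \<Rightarrow> complex set \<Rightarrow> bool" where
  "mat_holomorphic_on M S \<longleftrightarrow> (\<forall>i j. (\<lambda>z. M z $ i $ j) holomorphic_on S)"

lemma mat_holomorphic_on_add:
  "mat_holomorphic_on M S \<Longrightarrow> mat_holomorphic_on N S \<Longrightarrow> mat_holomorphic_on (\<lambda>z. M z + N z) S"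
  unfolding mat_holomorphic_on_def by (auto intro!: holomorphic_intros)

lemma mat_holomorphic_on_diff:
  "mat_holomorphic_on M S \<Longrightarrow> mat_holomorphic_on N S \<Longrightarrow> mat_holomorphic_on (\<lambda>z. M z - N z) S"
  unfolding mat_holomorphic_on_def by (auto intro!: holomorphic_intros)

lemma mat_holomorphic_on_mult:
  "mat_holomorphic_on M S \<Longrightarrow> mat_holomorphic_on N S \<Longrightarrow> mat_holomorphic_on (\<lambda>z. M z ** N z) S"
  unfolding mat_holomorphic_on_def matrix_matrix_mult_def by (auto intro!: holomorphic_intros)

lemma mat_holomorphic_on_mat:
  assumes "c holomorphic_on S"
  shows "mat_holomorphic_on (\<lambda>z. mat (c z)) S"
  unfolding mat_holomorphic_on_def
proof (intro allI)
  show "(\<lambda>z. mat (c z) $ i $ j) holomorphic_on S" for i j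
    using assms by (cases "i = j") (simp_all add: mat_def)
qed

lemma holomorphic_on_det: "mat_holomorphic_on M S \<Longrightarrow> (\<lambda>z. det (M z)) holomorphic_on S"
  unfolding mat_holomorphic_on_def det_def by (auto intro!: holomorphic_intros)

lemma mat_holomorphic_on_matrix_inv:
  assumes "mat_holomorphic_on M S" and "\<And>z. z \<in> S \<Longrightarrow> invertible (M z)"
  shows "mat_holomorphic_on (\<lambda>z. matrix_inv (M z)) S"
  unfolding mat_holomorphic_on_def
proof (intro allI)
  fix i k
  have "mat_holomorphic_on (\<lambda>z. \<chi> r c. if c = i then axis k 1 $ r else M z $ r $ c) S"
    unfolding mat_holomorphic_on_def
  proof (intro allI)
    show "(\<lambda>z. (\<chi> r c. if c = i then axis k 1 $ r else M z $ r $ c) $ r $ c) holomorphic_on S" for r c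
      using assms(1) by (cases "c = i") (simp_all add: mat_holomorphic_on_def)
  qed
  then have "(\<lambda>z. det (\<chi> r c. if c = i then axis k 1 $ r else M z $ r $ c) / det (M z))
      holomorphic_on S"
    using assms by (intro holomorphic_intros holomorphic_on_det) (auto simp: invertible_det_nz)
  then show "(\<lambda>z. matrix_inv (M z) $ i $ k) holomorphic_on S"
    by (rule holomorphic_transform) (simp add: matrix_inv_entry_cramer assms(2))
qed

lemma mat_holomorphic_on_cayley:
  assumes "mat_holomorphic_on M S" and "\<And>z v. z \<in> S \<Longrightarrow> M z *v v = v \<Longrightarrow> v = 0"
  shows "mat_holomorphic_on (\<lambda>z. cayley (M z)) S"
  unfolding cayley_def
  by (intro mat_holomorphic_on_mult mat_holomorphic_on_add mat_holomorphic_on_diff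
      mat_holomorphic_on_matrix_inv mat_holomorphic_on_mat invertible_minus_mat_1 assms
      holomorphic_intros)

lemma unit_disc_ne_1: "z \<in> unit_disc \<Longrightarrow> z \<noteq> 1"
  by (auto simp: unit_disc_def)

lemma classC_iff:
  "\<psi> \<in> classC \<longleftrightarrow> mat_holomorphic_on \<psi> unit_disc \<and> (\<forall>z\<in>unit_disc. op_norm (\<psi> z) \<le> 1)
     \<and> (\<forall>z\<in>unit_disc. \<forall>v. \<psi> z *v v = v \<longrightarrow> v = 0)"
  by (auto simp: classC_def Hinf_def mat_holomorphic_on_def)

lemma cayley_in_classC:
  assumes "mat_holomorphic_on M unit_disc" and "\<And>z. z \<in> unit_disc \<Longrightarrow> dissipative (M z)"
  shows "(\<lambda>z. cayley (M z)) \<in> classC"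
  using assms dissipative_cayley
  by (auto simp: classC_iff intro!: mat_holomorphic_on_cayley) (meson dissipative_fixed_point)

lemma classC_cayley_cayley: "\<psi> \<in> classC \<Longrightarrow> z \<in> unit_disc \<Longrightarrow> cayley (cayley (\<psi> z)) = \<psi> z"
  by (intro cayley_cayley) (auto simp: classC_iff)

section \<open>Factorizing pairs\<close>

lemma const_on_disc_in_H2: "(\<lambda>z. if z \<in> unit_disc then v else 0) \<in> H2"
  unfolding H2_def
proof (intro CollectI conjI allI impI exI[where x = "2 * pi * (norm v)\<^sup>2"])
  show "(\<lambda>z. (if z \<in> unit_disc then v else 0) $ i) holomorphic_on unit_disc" for i
    by (rule holomorphic_transform[of "\<lambda>z. v $ i"]) simp_all
  fix r :: real
  assume "0 < r \<and> r < 1"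
  then have "(\<lambda>\<theta>. (norm (if of_real r * cis \<theta> \<in> unit_disc then v else 0))\<^sup>2) = (\<lambda>_. (norm v)\<^sup>2)"
    by (auto simp: unit_disc_def norm_mult)
  then show "(\<lambda>\<theta>. (norm (if of_real r * cis \<theta> \<in> unit_disc then v else 0))\<^sup>2) integrable_on {0..2 * pi}"
    and "integral {0..2 * pi} (\<lambda>\<theta>. (norm (if of_real r * cis \<theta> \<in> unit_disc then v else 0))\<^sup>2)
      \<le> 2 * pi * (norm v)\<^sup>2"
    by (simp_all add: integrable_const_ivl)
qed simp

lemma op_eq_H2_Mult_comp_iff:
  "op_eq_H2 (Mult F \<circ> Mult G) (Mult H) \<longleftrightarrow> (\<forall>z\<in>unit_disc. F z ** G z = H z)"
proof
  assume eq: "op_eq_H2 (Mult F \<circ> Mult G) (Mult H)"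
  show "\<forall>z\<in>unit_disc. F z ** G z = H z"
  proof (intro ballI matrix_eq[THEN iffD2] allI)
    fix z v
    assume z: "z \<in> unit_disc"
    have "(Mult F \<circ> Mult G) (\<lambda>z. if z \<in> unit_disc then v else 0) z
        = Mult H (\<lambda>z. if z \<in> unit_disc then v else 0) z"
      using eq const_on_disc_in_H2[of v] by (simp add: op_eq_H2_def)
    then show "(F z ** G z) *v v = H z *v v"
      using z by (simp add: Mult_def matrix_vector_mul_assoc)
  qed
qed (simp add: op_eq_H2_def Mult_def fun_eq_iff matrix_vector_mul_assoc)

lemma phi_mult_eq_phi_mat_iff:
  assumes "z \<noteq> 1"
  shows "(\<forall>t\<ge>0. phi t A ** phi t B = phi t (mat z))
    \<longleftrightarrow> cayley A + cayley B = mat ((z + 1) / (z - 1))"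
proof -
  define a b c where "a = opmat (cayley A)" and "b = opmat (cayley B)"
    and "c = opmat (mat ((z + 1) / (z - 1)) :: 'a op)"
  have "phi t A ** phi t B = phi t (mat z) \<longleftrightarrow> exp (t *\<^sub>R a) * exp (t *\<^sub>R b) = exp (t *\<^sub>R c)"
    for t
    by (simp add: phi_eq_exp cayley_mat assms a_def b_def c_def mat_of_inject[symmetric])
  moreover have "cayley A + cayley B = mat ((z + 1) / (z - 1)) \<longleftrightarrow> a + b = c"
    by (simp add: a_def b_def c_def mat_of_inject[symmetric] opmat_inverse)
  moreover have "exp (t *\<^sub>R a) * exp (t *\<^sub>R b) = exp (t *\<^sub>R c)" if "a + b = c" for t
  proof -
    have "b = c - a"
      using that by (simp add: algebra_simps)
    moreover have "c * a = a * c"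
      by (simp add: c_def opmat_mat_commute)
    ultimately have "a * b = b * a"
      by (simp add: right_diff_distrib left_diff_distrib)
    then have "(t *\<^sub>R a) * (t *\<^sub>R b) = (t *\<^sub>R b) * (t *\<^sub>R a)"
      by simp
    then show ?thesis
      by (simp add: exp_add_commuting[symmetric] that flip: scaleR_add_right)
  qed
  ultimately show ?thesis
    using exp_scaleR_mult_eq_imp_add_eq by blast
qed

lemma factorizing_pair_iff_cayley:
  assumes "\<psi>1 \<in> classC" and "\<psi>2 \<in> classC"
  shows "factorizing_pair \<psi>1 \<psi>2
    \<longleftrightarrow> (\<forall>z\<in>unit_disc. cayley (\<psi>1 z) + cayley (\<psi>2 z) = mat ((z + 1) / (z - 1)))"
proof -
  have "factorizing_pair \<psi>1 \<psi>2 \<longleftrightarrow> (\<forall>z\<in>unit_disc.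
      (\<forall>t\<ge>0. phi t (\<psi>1 z) ** phi t (\<psi>2 z) = phi t (mat z)) \<and>
      (\<forall>t\<ge>0. phi t (\<psi>2 z) ** phi t (\<psi>1 z) = phi t (mat z)))"
    using assms by (auto simp: factorizing_pair_def op_eq_H2_Mult_comp_iff phi_comp_def zE_def)
  then show ?thesis
    by (simp add: phi_mult_eq_phi_mat_iff unit_disc_ne_1 add.commute cong: ball_cong)
qed

theorem lemma4p5:
  fixes \<psi>1 :: "complex \<Rightarrow> complex^'n::finite^'n"
  assumes "\<psi>1 \<in> classC" and "cond_star \<psi>1"
  shows "\<exists>\<psi>2. \<psi>2 \<in> classC \<and> cond_star \<psi>2 \<and> factorizing_pair \<psi>1 \<psi>2
           \<and> (\<forall>\<psi>3. \<psi>3 \<in> classC \<and> cond_star \<psi>3 \<and> factorizing_pair \<psi>1 \<psi>3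
                  \<longrightarrow> (\<forall>z\<in>unit_disc. \<psi>3 z = \<psi>2 z))"
proof -
  define M where "M z = mat ((z + 1) / (z - 1)) - cayley (\<psi>1 z)" for z
  define \<psi>2 where "\<psi>2 z = cayley (M z)" for z
  have diss1: "dissipative (cayley (\<psi>1 z))" and diss_M: "dissipative (M z)" if "z \<in> unit_disc" for z
    using assms(2) that by (simp_all add: cond_star_iff_dissipative M_def)
  have "mat_holomorphic_on M unit_disc"
    using assms(1) unfolding M_def classC_iff
    by (intro mat_holomorphic_on_diff mat_holomorphic_on_mat mat_holomorphic_on_cayley
        holomorphic_intros) (auto dest: unit_disc_ne_1)
  then have C2: "\<psi>2 \<in> classC"
    unfolding \<psi>2_def by (intro cayley_in_classC diss_M)
  have cayley2: "cayley (\<psi>2 z) = M z" if "z \<in> unit_disc" for z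
    unfolding \<psi>2_def using dissipative_fixed_point[OF diss_M[OF that]] by (rule cayley_cayley)
  have "cond_star \<psi>2"
    using diss1 diss_M by (simp add: cond_star_iff_dissipative cayley2 M_def)
  moreover have "factorizing_pair \<psi>1 \<psi>2"
    using assms(1) C2 by (simp add: factorizing_pair_iff_cayley cayley2 M_def)
  moreover have "\<psi>3 z = \<psi>2 z"
    if "\<psi>3 \<in> classC" and "factorizing_pair \<psi>1 \<psi>3" and "z \<in> unit_disc" for \<psi>3 z
  proof -
    have "cayley (\<psi>3 z) = M z"
      using that assms(1) by (auto simp: factorizing_pair_iff_cayley M_def algebra_simps)
    then show ?thesis
      using that classC_cayley_cayley by (metis \<psi>2_def)
  qed
  ultimately show ?thesis
    using C2 by blast
qed

end
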